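(* Let $G$ be a group (identity $e$), $H$ an abelian group (written additively), and $f:G\to H$ satisfy $f(xy)+f(xy^{-1})=2f(x)$ for all $x,y\in G$, with $f(e)=0$. If $g\in G$ can be written as a product of involutions (elements $i$ with $i^2=e$), then $2f(g)=0$. In particular, if $G$ is generated by involutions, then $2f(g)=0$ for all $g\in G$. *)

theory Defs
  imports "HOL-Algebra.Algebra"
begin

definition involutions :: "('a, 'b) monoid_scheme \<Rightarrow> 'a set" where
  "involutions G = {i \<in> carrier G. i \<otimes>\<^bsub>G\<^esub> i = \<one>\<^bsub>G\<^esub>}"

definition prod_of_involutions :: "('a, 'b) monoid_scheme \<Rightarrow> 'a \<Rightarrow> bool" where
  "prod_of_involutions G g \<longleftrightarrow>
     (\<exists>is. set is \<subseteq> involutions G \<and> g = foldr (\<lambda>a b. a \<otimes>\<^bsub>G\<^esub> b) is \<one>\<^bsub>G\<^esub>)"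

end

theory Submission
  imports Defs
begin

text \<open>Putting \<open>y = i\<close> with \<open>i = i\<inverse>\<close> in the equation gives \<open>2 f(x i) = 2 f(x)\<close>: doubling \<open>f\<close>
  is invariant under right multiplication by involutions. Peeling the involutions off a
  product \<open>i\<^sub>1 \<cdots> i\<^sub>n\<close> from the right therefore reduces \<open>2 f(i\<^sub>1 \<cdots> i\<^sub>n)\<close> to \<open>2 f(e) = 0\<close>.
  Since involutions are self-inverse, the subgroup they generate consists of such products.\<close>

lemma (in monoid) multlist_append:
  assumes "set xs \<subseteq> carrier G" and "set ys \<subseteq> carrier G"
  shows "foldr (\<otimes>) (xs @ ys) \<one> = foldr (\<otimes>) xs \<one> \<otimes> foldr (\<otimes>) ys \<one>"
  using assms by (induction xs) (simp_all add: m_assoc)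

lemma involution_closed: "i \<in> involutions G \<Longrightarrow> i \<in> carrier G"
  unfolding involutions_def by auto

lemma (in group) inv_involution:
  assumes "i \<in> involutions G"
  shows "inv i = i"
  using assms inv_equality unfolding involutions_def by auto

lemma (in monoid) prod_of_involutions_mult:
  assumes "prod_of_involutions G g" and "prod_of_involutions G h"
  shows "prod_of_involutions G (g \<otimes> h)"
proof -
  obtain xs ys where xs: "set xs \<subseteq> involutions G" "g = foldr (\<otimes>) xs \<one>"
    and ys: "set ys \<subseteq> involutions G" "h = foldr (\<otimes>) ys \<one>"
    using assms unfolding prod_of_involutions_def by blast
  have "set xs \<subseteq> carrier G" "set ys \<subseteq> carrier G"
    using xs(1) ys(1) by (auto intro: involution_closed)
  then have "g \<otimes> h = foldr (\<otimes>) (xs @ ys) \<one>"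
    using xs(2) ys(2) by (simp add: multlist_append del: foldr_append)
  with xs(1) ys(1) show ?thesis
    unfolding prod_of_involutions_def by (intro exI[of _ "xs @ ys"]) auto
qed

lemma (in group) generate_involutions_prod_of_involutions:
  assumes "g \<in> generate G (involutions G)"
  shows "prod_of_involutions G g"
  using assms
proof (induction rule: generate.induct)
  case one
  show ?case unfolding prod_of_involutions_def by (intro exI[of _ "[]"]) simp
next
  case (incl i)
  then show ?case
    unfolding prod_of_involutions_def
    by (intro exI[of _ "[i]"]) (auto simp: involution_closed)
next
  case (inv i)
  then show ?case
    unfolding prod_of_involutions_def
    by (intro exI[of _ "[i]"]) (auto simp: inv_involution involution_closed)
next
  case (eng g h)
  from eng.IH show ?case by (rule prod_of_involutions_mult)
qed

locale jensen_map = G: group G + H: monoid H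
  for G :: "('a, 'c) monoid_scheme" and H :: "('b, 'd) monoid_scheme" and f :: "'a \<Rightarrow> 'b" +
  assumes jensen: "\<lbrakk>x \<in> carrier G; y \<in> carrier G\<rbrakk> \<Longrightarrow>
      f (x \<otimes>\<^bsub>G\<^esub> y) \<otimes>\<^bsub>H\<^esub> f (x \<otimes>\<^bsub>G\<^esub> inv\<^bsub>G\<^esub> y) = f x \<otimes>\<^bsub>H\<^esub> f x"
    and map_one: "f \<one>\<^bsub>G\<^esub> = \<one>\<^bsub>H\<^esub>"
begin

lemma square_mult_involution:
  assumes "g \<in> carrier G" and "i \<in> involutions G"
  shows "f (g \<otimes>\<^bsub>G\<^esub> i) \<otimes>\<^bsub>H\<^esub> f (g \<otimes>\<^bsub>G\<^esub> i) = f g \<otimes>\<^bsub>H\<^esub> f g"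
  using jensen[of g i] assms by (simp add: involution_closed G.inv_involution)

lemma square_multlist_involutions:
  assumes "set is \<subseteq> involutions G"
  shows "f (foldr (\<otimes>\<^bsub>G\<^esub>) is \<one>\<^bsub>G\<^esub>) \<otimes>\<^bsub>H\<^esub> f (foldr (\<otimes>\<^bsub>G\<^esub>) is \<one>\<^bsub>G\<^esub>) = \<one>\<^bsub>H\<^esub>"
  using assms
proof (induction "is" rule: rev_induct)
  case Nil
  show ?case by (simp add: map_one)
next
  case (snoc i "is")
  have carr: "set is \<subseteq> carrier G" "i \<in> carrier G"
    using snoc.prems by (auto intro: involution_closed)
  then have "foldr (\<otimes>\<^bsub>G\<^esub>) (is @ [i]) \<one>\<^bsub>G\<^esub> = foldr (\<otimes>\<^bsub>G\<^esub>) is \<one>\<^bsub>G\<^esub> \<otimes>\<^bsub>G\<^esub> i"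
    using G.multlist_append[of "is" "[i]"] by simp
  with snoc carr show ?case
    using square_mult_involution[of "foldr (\<otimes>\<^bsub>G\<^esub>) is \<one>\<^bsub>G\<^esub>" i] by simp
qed

lemma square_prod_of_involutions:
  assumes "prod_of_involutions G g"
  shows "f g \<otimes>\<^bsub>H\<^esub> f g = \<one>\<^bsub>H\<^esub>"
  using assms square_multlist_involutions unfolding prod_of_involutions_def by auto

end

theorem mainTheorem3:
  fixes G :: "('a, 'c) monoid_scheme" and H :: "('b, 'd) monoid_scheme" and f :: "'a \<Rightarrow> 'b"
  assumes "group G" and "comm_group H"
    and "f \<in> carrier G \<rightarrow> carrier H"
    and "\<forall>x\<in>carrier G. \<forall>y\<in>carrier G.
           f (x \<otimes>\<^bsub>G\<^esub> y) \<otimes>\<^bsub>H\<^esub> f (x \<otimes>\<^bsub>G\<^esub> inv\<^bsub>G\<^esub> y) = f x \<otimes>\<^bsub>H\<^esub> f x"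
    and "f \<one>\<^bsub>G\<^esub> = \<one>\<^bsub>H\<^esub>"
  shows "(\<forall>g\<in>carrier G. prod_of_involutions G g \<longrightarrow> f g \<otimes>\<^bsub>H\<^esub> f g = \<one>\<^bsub>H\<^esub>)
       \<and> (generate G (involutions G) = carrier G \<longrightarrow>
            (\<forall>g\<in>carrier G. f g \<otimes>\<^bsub>H\<^esub> f g = \<one>\<^bsub>H\<^esub>))"
proof -
  interpret H: comm_group H by fact
  interpret jensen_map G H f
    using assms by (intro jensen_map.intro) (auto simp: jensen_map_axioms_def)
  show ?thesis
    using square_prod_of_involutions G.generate_involutions_prod_of_involutions by blast
qed

end
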